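(* Let $D\subset\mathbb{R}^2$ be a compact set of finite perimeter with $\frac1r\lambda_2((D\oplus rB^2)\setminus D)\to\infty$ as $r\to0_+$, and let $A'=D\times[0,1]\subset\mathbb{R}^3$. Then $A'$ does not admit the isotropic outer Minkowski content, and for every two-dimensional linear subspace $L\subset\mathbb{R}^3$ with $e_3\notin L$, $A'$ does not admit the outer $(B^3\cap L)$-Minkowski content (indeed $\frac1r\lambda_3((A'\oplus rQ)\setminus A')\to\infty$ for every two-dimensional convex body $Q\subset L$). Consequently, there is a compact set $A\subset\mathbb{R}^3$ of finite perimeter (a disjoint union of three suitably placed isometric copies of $A'$) such that $A$ admits neither the isotropic outer Minkowski content nor the outer $Q$-Minkowski content for any two-dimensional compact convex set $Q$ contained in a two-dimensional linear subspace of $\mathbb{R}^3$.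
   Context: $B^m$ denotes the Euclidean unit ball in $\mathbb{R}^m$, $e_3$ the third standard basis vector, $\lambda_m$ Lebesgue measure, $A\oplus Q=\{x+y\}$. The outer $Q$-Minkowski content is $\mathcal{SM}_Q(A)=\lim_{r\to0_+}\frac1r\lambda_3((A\oplus rQ)\setminus A)$, admitted if the limit exists and is finite; the isotropic one uses $Q=B^3$. *)

theory Defs
  imports "HOL-Analysis.Analysis"
begin

definition msum :: "'a::real_vector set \<Rightarrow> 'a set \<Rightarrow> 'a set" where
  "msum A Q = {x + y | x y. x \<in> A \<and> y \<in> Q}"

definition dilate :: "real \<Rightarrow> 'a::real_vector set \<Rightarrow> 'a set" where
  "dilate r Q = (\<lambda>y. r *\<^sub>R y) ` Q"

definition mink_quot :: "'a::euclidean_space set \<Rightarrow> 'a set \<Rightarrow> real \<Rightarrow> real" where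
  "mink_quot Q A r = measure lebesgue (msum A (dilate r Q) - A) / r"

definition admits_outer_MC :: "'a::euclidean_space set \<Rightarrow> 'a set \<Rightarrow> bool" where
  "admits_outer_MC Q A \<longleftrightarrow> (\<exists>l::real. (mink_quot Q A \<longlongrightarrow> l) (at_right 0))"

definition test_field :: "('a::euclidean_space \<Rightarrow> 'a) \<Rightarrow> ('a \<Rightarrow> 'a \<Rightarrow>\<^sub>L 'a) \<Rightarrow> bool" where
  "test_field \<phi> \<phi>' \<longleftrightarrow> (\<forall>x. (\<phi> has_derivative blinfun_apply (\<phi>' x)) (at x))
     \<and> continuous_on UNIV \<phi>' \<and> bounded {x. \<phi> x \<noteq> 0} \<and> (\<forall>x. norm (\<phi> x) \<le> 1)"

definition divergence :: "('a::euclidean_space \<Rightarrow> 'a \<Rightarrow>\<^sub>L 'a) \<Rightarrow> 'a \<Rightarrow> real" where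
  "divergence \<phi>' x = (\<Sum>i\<in>Basis. blinfun_apply (\<phi>' x) i \<bullet> i)"

text \<open>Finite perimeter (De Giorgi): the total variation of the indicator function is finite.\<close>
definition finite_perimeter :: "'a::euclidean_space set \<Rightarrow> bool" where
  "finite_perimeter E \<longleftrightarrow> E \<in> sets lebesgue \<and>
     (\<exists>C::real. \<forall>\<phi> \<phi>'. test_field \<phi> \<phi>' \<longrightarrow> integral E (divergence \<phi>') \<le> C)"

definition cyl :: "(real^2) set \<Rightarrow> (real^3) set" where
  "cyl D = {x. (vector [x$1, x$2] :: real^2) \<in> D \<and> 0 \<le> x$3 \<and> x$3 \<le> 1}"

definition e3 :: "real^3" where "e3 = axis 3 1"

definition isometry3 :: "(real^3 \<Rightarrow> real^3) \<Rightarrow> bool" where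
  "isometry3 T \<longleftrightarrow> (\<forall>x y. dist (T x) (T y) = dist x y)"

end

(*
  Let Q be a planar convex body whose plane does not contain the axis e3 of the cylinder
  A' = D x [0,1].  Translating Q so that it contains a small disc around 0 of its plane,
  the plane is the graph of a linear height function over the horizontal plane, so rQ
  contains a tilted copy of a horizontal disc of radius proportional to r.  Hence, away
  from an O(r)-neighbourhood of the bottom and the top, (A' + rQ) \ A' contains the
  product of the planar ring (D + c r B^2) \ D with an interval, and the quotient for A'
  is at least a constant times the planar quotient of D, which tends to infinity.
  Every plane through 0 misses one of e1, e2, e3, so among three copies of A' with these
  axes, placed far apart, one always blows up; far apart copies do not interact for small r.
  Finite perimeter passes to A' by splitting the divergence into its horizontal part,
  bounded slicewise by the perimeter of D, and its vertical part, which integrates to at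
  most 2 on each vertical segment; it passes to isometric copies because the divergence
  is a trace.
*)
theory Submission
  imports Defs
begin

section \<open>Outer Minkowski quotients\<close>

lemma compact_msum_dilate:
  "compact (A::'a::euclidean_space set) \<Longrightarrow> compact Q \<Longrightarrow> compact (msum A (dilate r Q))"
  unfolding msum_def dilate_def by (intro compact_sums compact_scaling)

lemma lmeasurable_msum_dilate_diff:
  "compact (A::'a::euclidean_space set) \<Longrightarrow> compact Q \<Longrightarrow> msum A (dilate r Q) - A \<in> lmeasurable"
  by (intro fmeasurable_Diff lmeasurable_compact compact_msum_dilate)
     (auto intro: fmeasurableD lmeasurable_compact)

lemma not_admits_outer_MC_if_filterlim_at_top:
  assumes "filterlim (mink_quot Q A) at_top (at_right 0)"
  shows "\<not> admits_outer_MC Q A"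
  using assms not_tendsto_and_filterlim_at_infinity[of "at_right (0::real)" "mink_quot Q A"]
    filterlim_at_top_imp_at_infinity
  by (auto simp: admits_outer_MC_def)

lemma msum_dilate_translate:
  fixes A Q :: "'a::real_vector set"
  shows "msum A (dilate r Q) = (+) (r *\<^sub>R q0) ` msum A (dilate r ((\<lambda>q. q - q0) ` Q))"
proof (intro equalityI subsetI)
  fix x assume "x \<in> msum A (dilate r Q)"
  then obtain a q where aq: "a \<in> A" "q \<in> Q" and "x = a + r *\<^sub>R q"
    unfolding msum_def dilate_def by blast
  then have x: "x = r *\<^sub>R q0 + (a + r *\<^sub>R (q - q0))"
    by (simp add: algebra_simps)
  have "a + r *\<^sub>R (q - q0) \<in> msum A (dilate r ((\<lambda>q. q - q0) ` Q))"
    using aq unfolding msum_def dilate_def by blast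
  then show "x \<in> (+) (r *\<^sub>R q0) ` msum A (dilate r ((\<lambda>q. q - q0) ` Q))"
    unfolding x by (rule imageI)
next
  fix x assume "x \<in> (+) (r *\<^sub>R q0) ` msum A (dilate r ((\<lambda>q. q - q0) ` Q))"
  then obtain a q where aq: "a \<in> A" "q \<in> Q" and "x = r *\<^sub>R q0 + (a + r *\<^sub>R (q - q0))"
    unfolding msum_def dilate_def by blast
  then have "x = a + r *\<^sub>R q"
    by (simp add: algebra_simps)
  then show "x \<in> msum A (dilate r Q)"
    using aq unfolding msum_def dilate_def by blast
qed

lemma mink_quot_translate_le:
  fixes A Q :: "'a::euclidean_space set"
  assumes A: "compact A" and Q: "compact Q" and q0: "q0 \<in> Q" and r: "r > 0"
  shows "mink_quot ((\<lambda>q. q - q0) ` Q) A r \<le> mink_quot Q A r"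
proof -
  define M' where "M' = msum A (dilate r ((\<lambda>q. q - q0) ` Q))"
  have M': "M' \<in> lmeasurable"
    unfolding M'_def using A Q by (intro lmeasurable_compact compact_msum_dilate compact_translation_subtract)
  have "a + r *\<^sub>R (q0 - q0) \<in> M'" if "a \<in> A" for a
    using that q0 unfolding M'_def msum_def dilate_def by blast
  then have "A \<subseteq> M'" by auto
  then have "measure lebesgue (M' - A) = measure lebesgue M' - measure lebesgue A"
    using M' fmeasurableD[OF lmeasurable_compact[OF A]] by (intro measure_Diff) (auto simp: fmeasurable_def)
  also have "\<dots> = measure lebesgue (msum A (dilate r Q)) - measure lebesgue A"
    by (simp add: msum_dilate_translate[of A r Q q0] M'_def measure_translation)
  also have "\<dots> \<le> measure lebesgue (msum A (dilate r Q) - A)"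
    using A Q by (intro measure_diff_le_measure_setdiff lmeasurable_compact compact_msum_dilate)
  finally show ?thesis using r
    by (simp add: mink_quot_def M'_def divide_right_mono)
qed

lemma msum_dilate_subset_cball:
  fixes X Q :: "'a::real_normed_vector set"
  assumes X: "X \<subseteq> cball c B" and Q: "Q \<subseteq> cball 0 B'" and r: "0 \<le> r" "r * B' \<le> 1"
  shows "msum X (dilate r Q) \<subseteq> cball c (B + 1)"
proof
  fix z assume "z \<in> msum X (dilate r Q)"
  then obtain x q where xq: "x \<in> X" "q \<in> Q" "z = x + r *\<^sub>R q" by (auto simp: msum_def dilate_def)
  have "norm (r *\<^sub>R q) \<le> 1"
    using xq Q r mult_left_mono[of "norm q" B' r] by auto
  moreover have "dist c x \<le> B" using xq X by auto
  ultimately show "z \<in> cball c (B + 1)"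
    using xq dist_triangle[of c z x] by (simp add: dist_norm)
qed

lemma eventually_msum_dilate_disjoint:
  fixes X Y Q :: "'a::real_normed_vector set"
  assumes X: "X \<subseteq> cball c B" and Y: "Y \<inter> cball c (B + 1) = {}" and Q: "bounded Q"
  shows "\<forall>\<^sub>F r in at_right 0. msum X (dilate r Q) \<inter> Y = {}"
proof -
  obtain B' where B': "B' > 0" "Q \<subseteq> cball 0 B'"
    using Q by (auto simp: bounded_pos subset_iff)
  have "msum X (dilate r Q) \<inter> Y = {}" if "0 < r" "r < 1 / B'" for r
    using msum_dilate_subset_cball[OF X B'(2), of r] Y that B' by (auto simp: field_simps)
  then show ?thesis
    unfolding eventually_at_right_field using B' by (intro exI[of _ "1 / B'"]) auto
qed

lemma mink_quot_Un_at_top: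
  fixes X Y Q :: "'a::euclidean_space set"
  assumes X: "compact X" and Y: "compact Y" and Q: "compact Q"
    and sep: "\<forall>\<^sub>F r in at_right 0. msum X (dilate r Q) \<inter> Y = {}"
    and lim: "filterlim (mink_quot Q X) at_top (at_right 0)"
  shows "filterlim (mink_quot Q (X \<union> Y)) at_top (at_right 0)"
proof (rule filterlim_at_top_mono[OF lim])
  have le: "mink_quot Q X r \<le> mink_quot Q (X \<union> Y) r"
    if r: "r > 0" and disj: "msum X (dilate r Q) \<inter> Y = {}" for r
  proof -
    have "msum X (dilate r Q) - X \<subseteq> msum (X \<union> Y) (dilate r Q) - (X \<union> Y)"
      using disj unfolding msum_def by blast
    then have "measure lebesgue (msum X (dilate r Q) - X)
        \<le> measure lebesgue (msum (X \<union> Y) (dilate r Q) - (X \<union> Y))"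
      using X Y Q by (intro measure_mono_fmeasurable fmeasurableD lmeasurable_msum_dilate_diff compact_Un)
    then show ?thesis using r by (simp add: mink_quot_def divide_right_mono)
  qed
  then show "\<forall>\<^sub>F r in at_right 0. mink_quot Q X r \<le> mink_quot Q (X \<union> Y) r"
    by (rule eventually_mono[OF eventually_conj[OF eventually_at_right_less sep]]) (use le in auto)
qed

lemma mink_quot_isometric_image:
  fixes R :: "real^'n::{finite,wellorder} \<Rightarrow> real^'n::_"
  assumes R: "orthogonal_transformation R" and C: "compact C" and Q: "compact Q"
  shows "mink_quot (R ` Q) ((\<lambda>x. R x + c) ` C) r = mink_quot Q C r"
proof -
  define T where "T = (\<lambda>x. R x + c)"
  have lin: "linear R" using R by (rule orthogonal_transformation_linear)
  have "inj T" unfolding T_def using orthogonal_transformation_inj[OF R] by (auto simp: inj_def)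
  moreover have "msum (T ` C) (dilate r (R ` Q)) = T ` msum C (dilate r Q)"
  proof -
    have eq: "T x + r *\<^sub>R R q = T (x + r *\<^sub>R q)" for x q
      by (simp add: T_def linear_add[OF lin] linear_scale[OF lin])
    show ?thesis
    proof (intro equalityI subsetI)
      fix z assume "z \<in> msum (T ` C) (dilate r (R ` Q))"
      then obtain x q where xq: "x \<in> C" "q \<in> Q" and z: "z = T x + r *\<^sub>R R q"
        unfolding msum_def dilate_def by blast
      have "x + r *\<^sub>R q \<in> msum C (dilate r Q)"
        using xq unfolding msum_def dilate_def by blast
      then show "z \<in> T ` msum C (dilate r Q)"
        unfolding z eq by (rule imageI)
    next
      fix z assume "z \<in> T ` msum C (dilate r Q)"
      then obtain x q where xq: "x \<in> C" "q \<in> Q" and z: "z = T (x + r *\<^sub>R q)"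
        unfolding msum_def dilate_def by blast
      show "z \<in> msum (T ` C) (dilate r (R ` Q))"
        unfolding z eq[symmetric] msum_def dilate_def using xq by blast
    qed
  qed
  ultimately have "msum (T ` C) (dilate r (R ` Q)) - T ` C = (+) c ` R ` (msum C (dilate r Q) - C)"
    by (simp add: image_set_diff image_image T_def add.commute)
  then show ?thesis
    using measure_orthogonal_image[OF R lmeasurable_msum_dilate_diff[OF C Q]]
    by (simp add: mink_quot_def T_def measure_translation)
qed

lemma filterlim_mult_at_right_0:
  assumes "c > 0"
  shows "filterlim (\<lambda>r::real. c * r) (at_right 0) (at_right 0)"
proof (rule tendsto_imp_filterlim_at_right)
  show "((\<lambda>r::real. c * r) \<longlongrightarrow> 0) (at_right 0)"
    using tendsto_mult_left[OF tendsto_ident_at, of c 0 "{0<..}"] by simp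
  show "\<forall>\<^sub>F r in at_right 0. c * r > 0"
    using assms by (auto intro: eventually_mono[OF eventually_at_right_less])
qed

section \<open>Perimeter under disjoint unions and isometries\<close>

lemma integral_continuous_compact_lborel:
  fixes f :: "'a::euclidean_space \<Rightarrow> real"
  assumes S: "compact S" and f: "continuous_on S f"
  shows "f integrable_on S" "integral S f = (\<integral>x. indicator S x * f x \<partial>lborel)"
proof -
  have "integrable lborel (\<lambda>x. indicator S x *\<^sub>R f x)"
    by (rule borel_integrable_compact[OF S f])
  then have "((\<lambda>x. indicator S x * f x) has_integral (\<integral>x. indicator S x * f x \<partial>lborel)) UNIV"
    using has_integral_integral_lborel by simp
  then have "(f has_integral (\<integral>x. indicator S x * f x \<partial>lborel)) S"
    by (simp add: indicator_times_eq_if has_integral_restrict_UNIV)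
  then show "f integrable_on S" "integral S f = (\<integral>x. indicator S x * f x \<partial>lborel)"
    by (auto simp: integral_unique)
qed

lemma continuous_on_divergence:
  assumes "continuous_on UNIV \<phi>'"
  shows "continuous_on S (divergence \<phi>')"
  unfolding divergence_def
  by (intro continuous_on_sum continuous_on_blinfun_matrix continuous_on_subset[OF assms]) auto

lemma finite_perimeter_Un_disjoint:
  fixes E1 E2 :: "'a::euclidean_space set"
  assumes c1: "compact E1" and c2: "compact E2" and d: "E1 \<inter> E2 = {}"
    and f1: "finite_perimeter E1" and f2: "finite_perimeter E2"
  shows "finite_perimeter (E1 \<union> E2)"
proof -
  obtain C1 where C1: "\<And>\<phi> \<phi>'. test_field \<phi> \<phi>' \<Longrightarrow> integral E1 (divergence \<phi>') \<le> C1"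
    using f1 by (auto simp: finite_perimeter_def)
  obtain C2 where C2: "\<And>\<phi> \<phi>'. test_field \<phi> \<phi>' \<Longrightarrow> integral E2 (divergence \<phi>') \<le> C2"
    using f2 by (auto simp: finite_perimeter_def)
  have "integral (E1 \<union> E2) (divergence \<phi>') \<le> C1 + C2" if tf: "test_field \<phi> \<phi>'" for \<phi> \<phi>'
  proof -
    have cont: "continuous_on UNIV \<phi>'" using tf by (simp add: test_field_def)
    have "integral (E1 \<union> E2) (divergence \<phi>') = integral E1 (divergence \<phi>') + integral E2 (divergence \<phi>')"
      using integral_continuous_compact_lborel(1)[OF c1 continuous_on_divergence[OF cont]]
        integral_continuous_compact_lborel(1)[OF c2 continuous_on_divergence[OF cont]] d
      by (intro integral_unique has_integral_Un) (auto simp: has_integral_integral)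
    then show ?thesis using C1[OF tf] C2[OF tf] by simp
  qed
  moreover have "E1 \<union> E2 \<in> sets lebesgue"
    using c1 c2 by (intro fmeasurableD lmeasurable_compact compact_Un)
  ultimately show ?thesis unfolding finite_perimeter_def by blast
qed

lemma sum_Basis_cart: "(\<Sum>b\<in>(Basis :: (real^'n) set). g b) = (\<Sum>j\<in>UNIV. g (axis j 1))"
  by (rule sum.reindex_cong[of "\<lambda>j. axis j 1"]) (auto intro: injI simp: axis_eq_axis Basis_vec_def)

lemma divergence_cart:
  fixes \<phi>' :: "real^'n \<Rightarrow> (real^'n) \<Rightarrow>\<^sub>L (real^'n)"
  shows "divergence \<phi>' x = (\<Sum>j\<in>UNIV. blinfun_apply (\<phi>' x) (axis j 1) $ j)"
  unfolding divergence_def sum_Basis_cart by (simp add: inner_axis)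

lemma divergence_eq_trace:
  fixes \<phi>' :: "real^'n \<Rightarrow> (real^'n) \<Rightarrow>\<^sub>L (real^'n)"
  shows "divergence \<phi>' x = trace (matrix (blinfun_apply (\<phi>' x)))"
  unfolding divergence_cart trace_def matrix_def by simp

lemma trace_matrix_conjugate:
  fixes L R R' :: "real^'n \<Rightarrow> real^'n"
  assumes "linear L" "linear R" "linear R'" and "\<And>x. R (R' x) = x"
  shows "trace (matrix (R' \<circ> L \<circ> R)) = trace (matrix L)"
proof -
  let ?L = "matrix L" and ?R = "matrix R" and ?R' = "matrix R'"
  have RR': "?R ** ?R' = mat 1"
    using assms matrix_compose[of R' R] by (simp add: o_def matrix_id_mat_1[unfolded id_def])
  have "trace (matrix (R' \<circ> L \<circ> R)) = trace (?R' ** (?L ** ?R))"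
    using assms by (simp add: matrix_compose linear_compose matrix_mul_assoc)
  also have "\<dots> = trace (?L ** (?R ** ?R'))"
    using trace_mul_sym[of ?R' "?L ** ?R"] by (simp add: matrix_mul_assoc)
  also have "\<dots> = trace ?L"
    by (simp add: RR')
  finally show ?thesis .
qed

lemma lborel_distr_isometry:
  fixes R :: "real^'n::{finite,wellorder} \<Rightarrow> real^'n::_"
  assumes R: "orthogonal_transformation R"
  shows "distr lborel borel (\<lambda>x. R x + c) = lborel"
proof (rule lborel_eqI[symmetric])
  fix l u :: "real^'n::{finite,wellorder}"
  assume lu: "\<And>b. b \<in> Basis \<Longrightarrow> l \<bullet> b \<le> u \<bullet> b"
  define T where "T = (\<lambda>x. R x + c)"
  have lin: "linear R" "linear (inv R)"
    using R orthogonal_transformation_inv[OF R] by (simp_all add: orthogonal_transformation_linear)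
  have T: "T \<in> borel_measurable borel"
    unfolding T_def using lin(1)
    by (intro borel_measurable_continuous_onI continuous_intros linear_continuous_on)
       (simp add: linear_conv_bounded_linear)
  have inv: "R (inv R y) = y" "inv R (R y) = y" for y
    using orthogonal_transformation_bij[OF R] by (simp_all add: bij_is_surj surj_f_inv_f bij_is_inj)
  have pre: "T -` box l u = inv R ` ((\<lambda>y. y - c) ` box l u)"
    by (auto simp: T_def image_iff inv) (metis add_diff_cancel_right' inv(2))
  have "measure lebesgue (T -` box l u) = measure lebesgue (box l u)"
    unfolding pre
    by (simp add: measure_orthogonal_image[OF orthogonal_transformation_inv[OF R]]
        measurable_translation_subtract measure_translation_subtract)
  moreover have "T -` box l u \<in> sets borel" "box l u \<in> sets borel"
    using measurable_sets[OF T, of "box l u"] by auto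
  moreover have "bounded (T -` box l u)"
    unfolding pre using lin(2)
    by (intro bounded_linear_image bounded_translation_minus bounded_box) (simp add: linear_conv_bounded_linear)
  moreover have "emeasure lborel X = ennreal (measure lebesgue X)"
    if "X \<in> sets borel" "bounded X" for X :: "(real^'n::{finite,wellorder}) set"
    using emeasure_bounded_finite[OF that(2)] that(1)
    by (simp add: emeasure_eq_ennreal_measure measure_completion)
  ultimately have "emeasure lborel (T -` box l u) = emeasure lborel (box l u)"
    by simp
  then show "emeasure (distr lborel borel T) (box l u) = (\<Prod>b\<in>Basis. (u - l) \<bullet> b)"
    using T lu by (simp add: emeasure_distr)
qed simp

lemma integral_isometric_image:
  fixes R :: "real^'n::{finite,wellorder} \<Rightarrow> real^'n::_" and g :: "real^'n::{finite,wellorder} \<Rightarrow> real"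
  assumes R: "orthogonal_transformation R" and E: "compact E" and g: "continuous_on UNIV g"
  shows "integral ((\<lambda>x. R x + c) ` E) g = integral E (\<lambda>x. g (R x + c))"
proof -
  define T where "T = (\<lambda>x. R x + c)"
  have "continuous_on UNIV R"
    using orthogonal_transformation_linear[OF R] by (simp add: linear_continuous_on linear_conv_bounded_linear)
  then have contT: "continuous_on UNIV T"
    unfolding T_def by (intro continuous_intros)
  have TE: "compact (T ` E)"
    using E contT by (metis compact_continuous_image continuous_on_subset subset_UNIV)
  have "inj T"
    using orthogonal_transformation_inj[OF R] by (auto simp: T_def inj_def)
  then have ind: "indicator (T ` E) (T x) = (indicator E x :: real)" for x
    by (simp add: indicator_def inj_image_mem_iff)
  have meas: "(\<lambda>y. indicator (T ` E) y * g y) \<in> borel_measurable borel"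
    using TE g by (intro borel_measurable_times borel_measurable_indicator borel_compact
        borel_measurable_continuous_onI)
  have "integral (T ` E) g = (\<integral>y. indicator (T ` E) y * g y \<partial>distr lborel borel T)"
    unfolding T_def lborel_distr_isometry[OF R]
    using integral_continuous_compact_lborel(2)[OF TE continuous_on_subset[OF g]] by (simp add: T_def)
  also have "\<dots> = (\<integral>x. indicator E x * g (T x) \<partial>lborel)"
    using meas contT by (subst integral_distr) (auto simp: ind intro: borel_measurable_continuous_onI)
  also have "\<dots> = integral E (\<lambda>x. g (T x))"
    using E continuous_on_subset[OF continuous_on_compose2[OF g contT]]
    by (intro integral_continuous_compact_lborel(2)[symmetric]) auto
  finally show ?thesis by (simp add: T_def)
qed

lemma test_field_compose_linear:
  fixes \<phi> :: "'a::euclidean_space \<Rightarrow> 'a" and P :: "'a \<Rightarrow> 'b::euclidean_space" and G :: "'b \<Rightarrow> 'a"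
  assumes tf: "test_field \<phi> \<phi>'" and P: "linear P" "\<And>v. norm (P v) \<le> norm v"
    and G: "linear G" "\<And>y. norm y \<le> norm (G y + c) + K"
  shows "test_field (\<lambda>y. P (\<phi> (G y + c))) (\<lambda>y. Blinfun P o\<^sub>L \<phi>' (G y + c) o\<^sub>L Blinfun G)"
proof -
  define \<psi> where "\<psi> y = P (\<phi> (G y + c))" for y
  define \<psi>' where "\<psi>' y = Blinfun P o\<^sub>L \<phi>' (G y + c) o\<^sub>L Blinfun G" for y
  have der: "\<And>x. (\<phi> has_derivative blinfun_apply (\<phi>' x)) (at x)" and cont: "continuous_on UNIV \<phi>'"
    and bnd: "bounded {x. \<phi> x \<noteq> 0}" and nrm: "\<And>x. norm (\<phi> x) \<le> 1"
    using tf by (auto simp: test_field_def)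
  have bl: "bounded_linear P" "bounded_linear G"
    using P(1) G(1) by (simp_all add: linear_conv_bounded_linear)
  have app: "blinfun_apply (\<psi>' y) = P \<circ> blinfun_apply (\<phi>' (G y + c)) \<circ> G" for y
    by (simp add: \<psi>'_def fun_eq_iff bounded_linear_Blinfun_apply bl)
  have \<psi>: "\<psi> = P \<circ> \<phi> \<circ> (\<lambda>y. G y + c)" by (simp add: \<psi>_def fun_eq_iff)
  have dG: "((\<lambda>y. G y + c) has_derivative G) (at y)" for y
    by (intro has_derivative_add_const bounded_linear_imp_has_derivative bl)
  have d\<psi>: "(\<psi> has_derivative blinfun_apply (\<psi>' y)) (at y)" for y
    unfolding \<psi> app
    by (intro diff_chain_at[OF dG] diff_chain_at[OF der] bounded_linear_imp_has_derivative bl)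
  have "continuous_on UNIV (\<lambda>y. \<phi>' (G y + c))"
    using bl(2) by (intro continuous_on_compose2[OF cont] continuous_intros linear_continuous_on) auto
  then have c\<psi>: "continuous_on UNIV \<psi>'"
    unfolding \<psi>'_def by (intro continuous_intros)
  obtain b where b: "\<And>x. \<phi> x \<noteq> 0 \<Longrightarrow> norm x \<le> b" using bnd by (auto simp: bounded_iff)
  have "norm y \<le> b + K" if "\<psi> y \<noteq> 0" for y
  proof -
    have "\<phi> (G y + c) \<noteq> 0" using that linear_0[OF P(1)] by (auto simp: \<psi>_def)
    then show ?thesis using b[of "G y + c"] G(2)[of y] by linarith
  qed
  then have b\<psi>: "bounded {y. \<psi> y \<noteq> 0}" unfolding bounded_iff by blast
  have "norm (\<psi> y) \<le> 1" for y
    using P(2) nrm order_trans unfolding \<psi>_def by blast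
  then show ?thesis
    using d\<psi> c\<psi> b\<psi> unfolding test_field_def \<psi>_def \<psi>'_def by blast
qed

lemma divergence_isometric_pullback:
  fixes R :: "real^'n::{finite,wellorder} \<Rightarrow> real^'n::_"
  assumes R: "orthogonal_transformation R"
  shows "divergence (\<lambda>x. Blinfun (inv R) o\<^sub>L \<phi>' (R x + c) o\<^sub>L Blinfun R) x = divergence \<phi>' (R x + c)"
proof -
  have lin: "linear R" "linear (inv R)"
    using R orthogonal_transformation_inv[OF R] by (simp_all add: orthogonal_transformation_linear)
  then have "blinfun_apply (Blinfun (inv R) o\<^sub>L \<phi>' (R x + c) o\<^sub>L Blinfun R)
      = inv R \<circ> blinfun_apply (\<phi>' (R x + c)) \<circ> R"
    by (simp add: fun_eq_iff bounded_linear_Blinfun_apply linear_conv_bounded_linear)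
  moreover have "R (inv R y) = y" for y
    using orthogonal_transformation_surj[OF R] by (simp add: surj_f_inv_f)
  ultimately show ?thesis
    using trace_matrix_conjugate[of "blinfun_apply (\<phi>' (R x + c))" R "inv R"] lin
    by (simp add: divergence_eq_trace blinfun.bounded_linear_right bounded_linear.linear)
qed

lemma finite_perimeter_isometric_image:
  fixes R :: "real^'n::{finite,wellorder} \<Rightarrow> real^'n::_"
  assumes R: "orthogonal_transformation R" and E: "compact E" and fE: "finite_perimeter E"
  shows "finite_perimeter ((\<lambda>x. R x + c) ` E)"
proof -
  obtain C where C: "\<And>\<phi> \<phi>'. test_field \<phi> \<phi>' \<Longrightarrow> integral E (divergence \<phi>') \<le> C"
    using fE by (auto simp: finite_perimeter_def)
  have "integral ((\<lambda>x. R x + c) ` E) (divergence \<phi>') \<le> C" if tf: "test_field \<phi> \<phi>'" for \<phi> \<phi>'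
  proof -
    have cont: "continuous_on UNIV \<phi>'" using tf by (simp add: test_field_def)
    have "integral ((\<lambda>x. R x + c) ` E) (divergence \<phi>') = integral E (\<lambda>x. divergence \<phi>' (R x + c))"
      by (rule integral_isometric_image[OF R E continuous_on_divergence[OF cont]])
    also have "\<dots> = integral E (divergence (\<lambda>x. Blinfun (inv R) o\<^sub>L \<phi>' (R x + c) o\<^sub>L Blinfun R))"
      by (rule integral_cong) (simp add: divergence_isometric_pullback[OF R])
    also have "\<dots> \<le> C"
    proof (rule C[OF test_field_compose_linear[OF tf]])
      show "linear (inv R)" "linear R"
        using R orthogonal_transformation_inv[OF R] by (simp_all add: orthogonal_transformation_linear)
      show "norm (inv R v) \<le> norm v" for v
        by (simp add: orthogonal_transformation_norm[OF orthogonal_transformation_inv[OF R]])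
      show "norm x \<le> norm (R x + c) + norm c" for x
        using norm_triangle_ineq4[of "R x + c" c] by (simp add: orthogonal_transformation_norm[OF R])
    qed
    finally show ?thesis .
  qed
  moreover have "compact ((\<lambda>x. R x + c) ` E)"
    using E orthogonal_transformation_linear[OF R]
    by (intro compact_continuous_image continuous_intros linear_continuous_on)
       (simp add: linear_conv_bounded_linear)
  ultimately show ?thesis
    unfolding finite_perimeter_def by (blast intro: fmeasurableD lmeasurable_compact)
qed

section \<open>Horizontal and vertical coordinates; the cylinder\<close>

definition horiz :: "real^3 \<Rightarrow> real^2" where
  "horiz x = vector [x$1, x$2]"

definition join3 :: "(real^2) \<times> real \<Rightarrow> real^3" where
  "join3 p = vector [fst p $ 1, fst p $ 2, snd p]"

definition split3 :: "real^3 \<Rightarrow> (real^2) \<times> real" where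
  "split3 x = (horiz x, x$3)"

lemma vec2_eq_iff: "(v::real^2) = w \<longleftrightarrow> v$1 = w$1 \<and> v$2 = w$2"
  by (metis (mono_tags, lifting) exhaust_2 vec_eq_iff)

lemma vec3_eq_iff: "(v::real^3) = w \<longleftrightarrow> v$1 = w$1 \<and> v$2 = w$2 \<and> v$3 = w$3"
  by (metis (mono_tags, lifting) exhaust_3 vec_eq_iff)

lemma prod_UNIV_2: "(\<Prod>i\<in>UNIV. (f::2\<Rightarrow>real) i) = f 1 * f 2"
  unfolding UNIV_2 by simp

lemma prod_UNIV_3: "(\<Prod>i\<in>UNIV. (f::3\<Rightarrow>real) i) = f 1 * f 2 * f 3"
  unfolding UNIV_3 by (simp add: mult.assoc)

lemma horiz_nth [simp]: "horiz x $ 1 = x $ 1" "horiz x $ 2 = x $ 2"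
  by (simp_all add: horiz_def)

lemma join3_nth [simp]: "join3 (y, t) $ 1 = y $ 1" "join3 (y, t) $ 2 = y $ 2" "join3 (y, t) $ 3 = t"
  by (simp_all add: join3_def)

lemma horiz_join3 [simp]: "horiz (join3 (y, t)) = y"
  by (simp add: vec2_eq_iff)

lemma join3_split3 [simp]: "join3 (split3 x) = x"
  by (simp add: split3_def vec3_eq_iff)

lemma cyl_eq: "cyl D = {x. horiz x \<in> D \<and> 0 \<le> x$3 \<and> x$3 \<le> 1}"
  by (simp add: cyl_def horiz_def)

lemma linear_horiz: "linear horiz"
  by (auto simp: linear_iff vec2_eq_iff)

lemma linear_join3: "linear join3"
  by (auto simp: linear_iff vec3_eq_iff)

lemma linear_split3: "linear split3"
  by (auto simp: linear_iff split3_def vec2_eq_iff)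

lemma continuous_on_join3: "continuous_on S join3"
  using linear_join3 by (intro linear_continuous_on) (simp add: linear_conv_bounded_linear)

lemma split3_borel_measurable [measurable]: "split3 \<in> borel_measurable borel"
  using linear_split3
  by (intro borel_measurable_continuous_onI linear_continuous_on) (simp add: linear_conv_bounded_linear)

lemma join3_borel_measurable [measurable]: "join3 \<in> borel_measurable borel"
  by (intro borel_measurable_continuous_onI continuous_on_join3)

lemma norm_horiz_le: "norm (horiz v) \<le> norm v"
proof -
  have "horiz v \<bullet> horiz v \<le> v \<bullet> v"
    by (simp add: inner_vec_def sum_2 sum_3)
  then show ?thesis by (simp add: norm_eq_sqrt_inner)
qed

lemma box_Pair_Times: "box (a, c) (b, d) = box a b \<times> box c d"
  by (auto simp: mem_box Basis_prod_def ball_Un)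

lemma lborel_distr_split3: "distr lborel borel split3 = (lborel :: ((real^2) \<times> real) measure)"
proof (rule lborel_eqI[symmetric])
  fix l u :: "(real^2) \<times> real"
  assume lu: "\<And>b. b \<in> Basis \<Longrightarrow> l \<bullet> b \<le> u \<bullet> b"
  obtain l1 l2 u1 u2 where l: "l = (l1, l2)" and u: "u = (u1, u2)" by (cases l, cases u) auto
  have lu1: "l1$i \<le> u1$i" for i
    using lu[of "(axis i 1, 0)"] by (auto simp: l u Basis_prod_def inner_axis cart_eq_inner_axis[symmetric])
  have lu2: "l2 \<le> u2"
    using lu[of "(0, 1)"] by (auto simp: l u Basis_prod_def)
  have pre: "split3 -` box l u = box (join3 l) (join3 u)"
    by (auto simp: l u split3_def join3_def box_Pair_Times mem_box_cart forall_2 forall_3)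
  have "join3 l \<in> cbox (join3 l) (join3 u)" "l1 \<in> cbox l1 u1"
    using lu1 lu2 by (auto simp: mem_box_cart l u join3_def forall_3)
  then have ne: "cbox (join3 l) (join3 u) \<noteq> {}" "cbox l1 u1 \<noteq> {}" by blast+
  have "emeasure (distr lborel borel split3) (box l u) = emeasure lborel (box (join3 l) (join3 u))"
    by (simp add: emeasure_distr pre)
  also have "\<dots> = ennreal (measure lborel (cbox (join3 l) (join3 u)))"
    using ne(1) by (simp add: content_cbox inner_diff_left box_ne_empty)
  also have "\<dots> = ennreal ((u1$1 - l1$1) * (u1$2 - l1$2) * (u2 - l2))"
    using ne(1) by (simp add: content_cbox_cart prod_UNIV_3 l u join3_def)
  also have "(u1$1 - l1$1) * (u1$2 - l1$2) * (u2 - l2) = measure lborel (cbox l u)"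
    using lu2 ne(2) by (auto simp: l u content_Pair content_cbox_cart prod_UNIV_2)
  also have "\<dots> = (\<Prod>b\<in>Basis. (u - l) \<bullet> b)"
    using lu by (simp add: content_cbox inner_diff_left)
  finally show "emeasure (distr lborel borel split3) (box l u) = (\<Prod>b\<in>Basis. (u - l) \<bullet> b)" .
qed simp

lemma slab_eq_vimage_split3:
  "{x. horiz x \<in> S \<and> a \<le> x$3 \<and> x$3 \<le> b} = split3 -` (S \<times> {a..b})"
  by (auto simp: split3_def)

lemma Times_Icc_borel: "(S::(real^2) set) \<in> sets borel \<Longrightarrow> S \<times> {a..b::real} \<in> sets borel"
  by (subst borel_prod[symmetric]) (intro pair_measureI, auto)

lemma slab_borel:
  assumes "S \<in> sets borel"
  shows "{x. horiz x \<in> S \<and> a \<le> x$3 \<and> x$3 \<le> b} \<in> sets borel"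
proof -
  have "S \<times> {a..b} \<in> sets borel"
    using assms by (rule Times_Icc_borel)
  then show ?thesis
    unfolding slab_eq_vimage_split3 using measurable_sets[OF split3_borel_measurable] by simp
qed

lemma measure_slab:
  fixes S :: "(real^2) set"
  assumes S: "S \<in> sets borel" "bounded S" and ab: "a \<le> b"
  shows "measure lebesgue {x. horiz x \<in> S \<and> a \<le> x$3 \<and> x$3 \<le> b} = measure lebesgue S * (b - a)"
proof -
  have "emeasure lborel {x. horiz x \<in> S \<and> a \<le> x$3 \<and> x$3 \<le> b}
      = emeasure (distr lborel borel split3) (S \<times> {a..b})"
    using S(1) Times_Icc_borel by (subst emeasure_distr) (auto simp: slab_eq_vimage_split3)
  also have "\<dots> = emeasure lborel S * emeasure lborel {a..b}"
    using S(1) by (simp add: lborel_distr_split3 lborel_prod[symmetric] lborel.emeasure_pair_measure_Times)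
  finally have "measure lborel {x. horiz x \<in> S \<and> a \<le> x$3 \<and> x$3 \<le> b} = measure lborel S * (b - a)"
    using emeasure_bounded_finite[OF S(2)] ab
    by (simp add: measure_def enn2real_mult)
  then show ?thesis
    using slab_borel[OF S(1)] S(1) by (simp add: measure_completion)
qed

lemma cyl_eq_image: "cyl D = join3 ` (D \<times> {0..1})"
proof (intro equalityI subsetI)
  fix x assume "x \<in> cyl D"
  then have "split3 x \<in> D \<times> {0..1}" by (auto simp: cyl_eq split3_def)
  then show "x \<in> join3 ` (D \<times> {0..1})" by (metis join3_split3 imageI)
qed (auto simp: cyl_eq)

lemma compact_cyl: "compact D \<Longrightarrow> compact (cyl D)"
  unfolding cyl_eq_image by (intro compact_continuous_image continuous_on_join3 compact_Times compact_Icc)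

section \<open>Minkowski quotients of the cylinder\<close>

lemma slab_subset_msum_cyl:
  fixes D :: "(real^2) set" and Q :: "(real^3) set" and h :: "real^2 \<Rightarrow> real"
  assumes eps: "\<epsilon> > 0" and r: "r > 0" and K: "K \<ge> 0"
    and h: "linear h" "\<And>w. \<bar>h w\<bar> \<le> K * norm w"
    and graph: "\<And>w. norm w \<le> \<epsilon> \<Longrightarrow> join3 (w, h w) \<in> Q"
  shows "{x. horiz x \<in> msum D (dilate (\<epsilon> * r) (cball 0 1)) - D
              \<and> K * (\<epsilon> * r) \<le> x$3 \<and> x$3 \<le> 1 - K * (\<epsilon> * r)}
         \<subseteq> msum (cyl D) (dilate r Q) - cyl D"
proof
  fix x :: "real^3"
  assume "x \<in> {x. horiz x \<in> msum D (dilate (\<epsilon> * r) (cball 0 1)) - D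
              \<and> K * (\<epsilon> * r) \<le> x$3 \<and> x$3 \<le> 1 - K * (\<epsilon> * r)}"
  then obtain d u where d: "d \<in> D" and u: "norm u \<le> 1" and hx: "horiz x = d + (\<epsilon> * r) *\<^sub>R u"
    and nD: "horiz x \<notin> D" and x3: "K * (\<epsilon> * r) \<le> x$3" "x$3 \<le> 1 - K * (\<epsilon> * r)"
    by (auto simp: msum_def dilate_def)
  define w where "w = \<epsilon> *\<^sub>R u"
  have q: "join3 (w, h w) \<in> Q"
    using graph u eps by (simp add: w_def mult_left_le)
  have "\<bar>h (r *\<^sub>R w)\<bar> \<le> K * (\<epsilon> * r)"
    using h(2)[of "r *\<^sub>R w"] u eps r K mult_left_le[of "norm u" "K * (\<epsilon> * r)"]
    by (simp add: w_def mult_ac)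
  then have hw: "\<bar>r * h w\<bar> \<le> K * (\<epsilon> * r)"
    by (simp add: linear_scale[OF h(1)])
  \<comment> \<open>Move \<open>x\<close> back along the tilted disc: the horizontal part lands on \<open>d \<in> D\<close>, and the
    vertical shift \<open>r * h w\<close> is absorbed by the margin \<open>K * (\<epsilon> * r)\<close> in the height of \<open>x\<close>.\<close>
  define c where "c = x - r *\<^sub>R join3 (w, h w)"
  have "horiz c = d"
    using hx by (simp add: c_def w_def vec2_eq_iff vec_eq_iff[of "horiz x"])
  moreover have "0 \<le> c$3" "c$3 \<le> 1"
    using hw x3 by (auto simp: c_def)
  ultimately have "c \<in> cyl D" using d by (simp add: cyl_eq)
  then have "x \<in> msum (cyl D) (dilate r Q)"
    using q unfolding msum_def dilate_def c_def by force
  moreover have "x \<notin> cyl D" using nD by (simp add: cyl_eq)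
  ultimately show "x \<in> msum (cyl D) (dilate r Q) - cyl D" by blast
qed

lemma mink_quot_cyl_lower_bound:
  fixes D :: "(real^2) set" and Q :: "(real^3) set" and h :: "real^2 \<Rightarrow> real"
  assumes D: "compact D" and Q: "compact Q" and eps: "\<epsilon> > 0" and K: "K \<ge> 0"
    and h: "linear h" "\<And>w. \<bar>h w\<bar> \<le> K * norm w"
    and graph: "\<And>w. norm w \<le> \<epsilon> \<Longrightarrow> join3 (w, h w) \<in> Q"
    and r: "r > 0" "4 * K * (\<epsilon> * r) \<le> 1"
  shows "\<epsilon> / 2 * mink_quot (cball 0 1) D (\<epsilon> * r) \<le> mink_quot Q (cyl D) r"
proof -
  define \<rho> where "\<rho> = \<epsilon> * r"
  have \<rho>: "\<rho> > 0" using eps r by (simp add: \<rho>_def)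
  define S where "S = msum D (dilate \<rho> (cball 0 1)) - D"
  have S: "S \<in> sets borel" "bounded S"
    unfolding S_def using compact_msum_dilate[OF D compact_cball, of \<rho> 0 1] D
    by (auto intro: sets.Diff borel_compact bounded_diff compact_imp_bounded)
  define Y where "Y = {x. horiz x \<in> S \<and> K * \<rho> \<le> x$3 \<and> x$3 \<le> 1 - K * \<rho>}"
  define X where "X = msum (cyl D) (dilate r Q) - cyl D"
  have "Y \<subseteq> X"
    unfolding Y_def X_def S_def \<rho>_def using slab_subset_msum_cyl[OF eps r(1) K h graph] by simp
  moreover have "Y \<in> sets lebesgue"
    unfolding Y_def using slab_borel[OF S(1)] by (auto intro: sets_completionI_sets)
  moreover have "X \<in> lmeasurable"
    unfolding X_def by (intro lmeasurable_msum_dilate_diff compact_cyl D Q)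
  ultimately have "measure lebesgue Y \<le> measure lebesgue X"
    by (rule measure_mono_fmeasurable)
  moreover have "measure lebesgue Y = measure lebesgue S * (1 - 2 * K * \<rho>)"
    unfolding Y_def using measure_slab[OF S, of "K * \<rho>" "1 - K * \<rho>"] r K
    by (simp add: \<rho>_def algebra_simps)
  moreover have "measure lebesgue S * (1 / 2) \<le> measure lebesgue S * (1 - 2 * K * \<rho>)"
    using r by (intro mult_left_mono) (auto simp: \<rho>_def)
  ultimately have "measure lebesgue S / 2 / r \<le> measure lebesgue X / r"
    using r by (intro divide_right_mono) auto
  then show ?thesis
    using eps r by (simp add: mink_quot_def S_def X_def \<rho>_def field_simps)
qed

lemma mink_quot_cyl_at_top_graph:
  fixes D :: "(real^2) set" and Q :: "(real^3) set" and h :: "real^2 \<Rightarrow> real"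
  assumes D: "compact D" and lim: "filterlim (mink_quot (cball 0 1) D) at_top (at_right 0)"
    and Q: "compact Q" and eps: "\<epsilon> > 0" and h: "linear h"
    and graph: "\<And>w. norm w \<le> \<epsilon> \<Longrightarrow> join3 (w, h w) \<in> Q"
  shows "filterlim (mink_quot Q (cyl D)) at_top (at_right 0)"
proof -
  obtain K where K: "K \<ge> 0" "\<And>w. \<bar>h w\<bar> \<le> K * norm w"
    using bounded_linear.nonneg_bounded[of h] h by (auto simp: linear_conv_bounded_linear mult.commute)
  have "filterlim (\<lambda>r. mink_quot (cball 0 1) D (\<epsilon> * r)) at_top (at_right 0)"
    using filterlim_compose[OF lim filterlim_mult_at_right_0[OF eps]] by simp
  then have "filterlim (\<lambda>r. \<epsilon> / 2 * mink_quot (cball 0 1) D (\<epsilon> * r)) at_top (at_right 0)"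
    using eps by (intro filterlim_tendsto_pos_mult_at_top[OF tendsto_const]) simp_all
  moreover have "\<forall>\<^sub>F r in at_right 0. \<epsilon> / 2 * mink_quot (cball 0 1) D (\<epsilon> * r) \<le> mink_quot Q (cyl D) r"
    unfolding eventually_at_right_field
  proof (intro exI conjI allI impI)
    show "1 / (4 * K * \<epsilon> + 1) > 0" using K eps by (simp add: add_nonneg_pos)
    fix r :: real assume r: "r > 0" "r < 1 / (4 * K * \<epsilon> + 1)"
    have "4 * K * \<epsilon> + 1 > 0" using K eps by (simp add: add_nonneg_pos)
    then have "r * (4 * K * \<epsilon> + 1) < 1" using r by (simp add: field_simps)
    then have small: "4 * K * (\<epsilon> * r) \<le> 1"
      using r by (simp add: algebra_simps)
    show "\<epsilon> / 2 * mink_quot (cball 0 1) D (\<epsilon> * r) \<le> mink_quot Q (cyl D) r"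
      by (rule mink_quot_cyl_lower_bound[OF D Q eps K(1) h K(2) graph r(1) small])
  qed
  ultimately show ?thesis by (rule filterlim_at_top_mono)
qed

lemma mink_quot_cyl_at_top:
  fixes D :: "(real^2) set" and Q :: "(real^3) set"
  assumes D: "compact D" and lim: "filterlim (mink_quot (cball 0 1) D) at_top (at_right 0)"
    and Q: "compact Q" and a3: "a$3 \<noteq> 0" and e: "e > 0"
    and disc: "\<And>v. a \<bullet> v = 0 \<Longrightarrow> norm v \<le> e \<Longrightarrow> q0 + v \<in> Q"
  shows "filterlim (mink_quot Q (cyl D)) at_top (at_right 0)"
proof -
  define h where "h w = - (a$1 * w$1 + a$2 * w$2) / a$3" for w :: "real^2"
  have h: "linear h" by (auto simp: linear_iff h_def add_divide_distrib[symmetric] algebra_simps)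
  have orth: "a \<bullet> join3 (w, h w) = 0" for w
    using a3 by (simp add: inner_vec_def sum_3 h_def field_simps)
  have "bounded_linear (\<lambda>w. join3 (w, h w))"
    using h linear_join3 unfolding linear_conv_bounded_linear[symmetric] by (auto simp: linear_iff)
  then obtain K where K: "K > 0" "\<And>w. norm (join3 (w, h w)) \<le> norm w * K"
    using bounded_linear.pos_bounded by blast
  define Q' where "Q' = (\<lambda>q. q - q0) ` Q"
  have graph: "join3 (w, h w) \<in> Q'" if "norm w \<le> e / K" for w
  proof -
    have "norm w * K \<le> e" using K that by (simp add: field_simps)
    then have "norm (join3 (w, h w)) \<le> e" using K(2)[of w] by linarith
    then have "q0 + join3 (w, h w) \<in> Q" using disc orth by blast
    then show ?thesis unfolding Q'_def by (rule rev_image_eqI) simp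
  qed
  have "compact Q'" unfolding Q'_def using Q by (rule compact_translation_subtract)
  then have "filterlim (mink_quot Q' (cyl D)) at_top (at_right 0)"
    using e K(1) by (intro mink_quot_cyl_at_top_graph[OF D lim _ _ h graph]) simp_all
  moreover have "\<forall>\<^sub>F r in at_right 0. mink_quot Q' (cyl D) r \<le> mink_quot Q (cyl D) r"
    unfolding Q'_def using disc[of 0] e
    by (intro eventually_mono[OF eventually_at_right_less] mink_quot_translate_le compact_cyl D Q) auto
  ultimately show ?thesis by (rule filterlim_at_top_mono)
qed

lemma convex_hyperplane_contains_disc:
  fixes Q :: "'a::euclidean_space set"
  assumes Qc: "convex Q" and Qd: "aff_dim Q = int DIM('a) - 1"
    and QH: "Q \<subseteq> {x. a \<bullet> x = 0}" and a: "a \<noteq> 0"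
  obtains q0 e where "e > 0" "\<And>v. a \<bullet> v = 0 \<Longrightarrow> norm v \<le> e \<Longrightarrow> q0 + v \<in> Q"
proof -
  have "Q \<noteq> {}" using Qd by auto
  then obtain q0 where "q0 \<in> rel_interior Q" using rel_interior_eq_empty[OF Qc] by blast
  then obtain e where e: "e > 0" "cball q0 e \<inter> affine hull Q \<subseteq> Q" "q0 \<in> Q"
    by (auto simp: mem_rel_interior_cball)
  have H: "affine {x. a \<bullet> x = 0}" by (simp add: affine_hyperplane)
  have "affine hull Q = {x. a \<bullet> x = 0}"
  proof (rule ccontr)
    assume "affine hull Q \<noteq> {x. a \<bullet> x = 0}"
    moreover have "affine hull Q \<subseteq> {x. a \<bullet> x = 0}" using QH H by (simp add: hull_minimal)
    ultimately have "affine hull Q \<subset> affine hull {x. a \<bullet> x = 0}" using H by (simp add: hull_same)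
    then have "aff_dim Q < aff_dim {x. a \<bullet> x = 0}" by (rule aff_dim_psubset)
    then show False using Qd aff_dim_hyperplane[OF a] by simp
  qed
  moreover have "a \<bullet> q0 = 0" using QH e(3) by auto
  ultimately have "q0 + v \<in> Q" if "a \<bullet> v = 0" "norm v \<le> e" for v
    using that e by (auto simp: inner_add_right dist_norm subset_iff)
  with e(1) show ?thesis by (rule that)
qed

lemma subspace_eq_hyperplane:
  fixes L :: "'a::euclidean_space set"
  assumes "subspace L" "dim L = DIM('a) - 1"
  obtains a where "a \<noteq> 0" "L = {x. a \<bullet> x = 0}"
  using dim_eq_hyperplane[THEN iffD1, OF assms(2)] span_eq_iff[THEN iffD2, OF assms(1)] that by metis

lemma planar_convex_contains_disc:
  fixes Q :: "(real^3) set"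
  assumes "convex Q" "aff_dim Q = 2" "Q \<subseteq> {x. a \<bullet> x = 0}" "a \<noteq> 0"
  obtains q0 e where "e > 0" "\<And>v. a \<bullet> v = 0 \<Longrightarrow> norm v \<le> e \<Longrightarrow> q0 + v \<in> Q"
proof -
  have "aff_dim Q = int DIM(real^3) - 1" using assms(2) by simp
  then show ?thesis using convex_hyperplane_contains_disc[OF assms(1) _ assms(3,4)] that by blast
qed

lemma plane_not_containing_e3:
  fixes L :: "(real^3) set"
  assumes "subspace L" "dim L = 2" "e3 \<notin> L"
  obtains a where "a$3 \<noteq> 0" "L = {x. a \<bullet> x = 0}"
proof -
  obtain a where a: "a \<noteq> 0" "L = {x. a \<bullet> x = 0}"
    using subspace_eq_hyperplane[of L] assms by auto
  moreover have "a$3 \<noteq> 0" using assms(3) a(2) by (auto simp: e3_def inner_axis)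
  ultimately show ?thesis using that by blast
qed

lemma mink_quot_cyl_ball_at_top:
  fixes D :: "(real^2) set"
  assumes D: "compact D" and lim: "filterlim (mink_quot (cball 0 1) D) at_top (at_right 0)"
  shows "filterlim (mink_quot (cball (0::real^3) 1) (cyl D)) at_top (at_right 0)"
  by (rule mink_quot_cyl_at_top[OF D lim compact_cball _ zero_less_one, of "axis 3 1" 0]) simp_all

lemma mink_quot_cyl_ball_plane_at_top:
  fixes D :: "(real^2) set" and L :: "(real^3) set"
  assumes D: "compact D" and lim: "filterlim (mink_quot (cball 0 1) D) at_top (at_right 0)"
    and L: "subspace L" "dim L = 2" "e3 \<notin> L"
  shows "filterlim (mink_quot (cball 0 1 \<inter> L) (cyl D)) at_top (at_right 0)"
proof -
  obtain a where a: "a$3 \<noteq> 0" "L = {x. a \<bullet> x = 0}" using plane_not_containing_e3[OF L] .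
  have "compact (cball 0 1 \<inter> L)"
    unfolding a(2) by (intro compact_Int_closed compact_cball closed_hyperplane)
  moreover have "\<And>v. a \<bullet> v = 0 \<Longrightarrow> norm v \<le> 1 \<Longrightarrow> 0 + v \<in> cball 0 1 \<inter> L"
    using a(2) by simp
  ultimately show ?thesis by (rule mink_quot_cyl_at_top[OF D lim _ a(1) zero_less_one])
qed

lemma mink_quot_cyl_planar_at_top:
  fixes D :: "(real^2) set" and L Q :: "(real^3) set"
  assumes D: "compact D" and lim: "filterlim (mink_quot (cball 0 1) D) at_top (at_right 0)"
    and L: "subspace L" "dim L = 2" "e3 \<notin> L"
    and Q: "compact Q" "convex Q" "aff_dim Q = 2" "Q \<subseteq> L"
  shows "filterlim (mink_quot Q (cyl D)) at_top (at_right 0)"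
proof -
  obtain a where a: "a$3 \<noteq> 0" "L = {x. a \<bullet> x = 0}" using plane_not_containing_e3[OF L] .
  then have "a \<noteq> 0" by auto
  then obtain q0 e where "e > 0" "\<And>v. a \<bullet> v = 0 \<Longrightarrow> norm v \<le> e \<Longrightarrow> q0 + v \<in> Q"
    using planar_convex_contains_disc[OF Q(2,3)] Q(4) a(2) by metis
  then show ?thesis using mink_quot_cyl_at_top[OF D lim Q(1) a(1)] by metis
qed

section \<open>Perimeter of the cylinder\<close>

lemma indicator_cyl_join3:
  "indicator (cyl D) (join3 p) = (indicator D (fst p) * indicator {0..1} (snd p) :: real)"
  by (cases p) (auto simp: indicator_def cyl_eq)

lemma integral_cyl_eq_pair_integral:
  fixes F :: "real^3 \<Rightarrow> real" and D :: "(real^2) set"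
  assumes D: "compact D" and F: "continuous_on UNIV F"
  defines "G \<equiv> \<lambda>p. indicator D (fst p) * indicator {0..1} (snd p) * F (join3 p)"
  shows "integrable (lborel \<Otimes>\<^sub>M lborel) G" and "integral (cyl D) F = integral\<^sup>L (lborel \<Otimes>\<^sub>M lborel) G"
proof -
  have C: "compact (cyl D)" by (rule compact_cyl[OF D])
  define H where "H = (\<lambda>x. indicator (cyl D) x * F x)"
  have iH: "integrable lborel H"
    using borel_integrable_compact[OF C continuous_on_subset[OF F]] by (simp add: H_def)
  have mH: "H \<in> borel_measurable borel"
    unfolding H_def
    by (intro borel_measurable_times borel_measurable_indicator borel_compact C borel_measurable_continuous_onI F)
  have GH: "G = H \<circ> join3" by (auto simp: G_def H_def fun_eq_iff indicator_cyl_join3)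
  have mG: "G \<in> borel_measurable borel" unfolding GH using mH by measurable
  have HG: "G (split3 x) = H x" for x by (simp add: GH)
  have "integrable (distr lborel borel split3) G"
    using mG by (subst integrable_distr_eq) (auto simp: HG iH)
  then show "integrable (lborel \<Otimes>\<^sub>M lborel) G"
    by (simp add: lborel_distr_split3 lborel_prod)
  have "integral (cyl D) F = integral\<^sup>L lborel H"
    using integral_continuous_compact_lborel(2)[OF C continuous_on_subset[OF F]] by (simp add: H_def)
  also have "\<dots> = integral\<^sup>L (distr lborel borel split3) G"
    using mG by (subst integral_distr) (auto simp: HG)
  finally show "integral (cyl D) F = integral\<^sup>L (lborel \<Otimes>\<^sub>M lborel) G"
    by (simp add: lborel_distr_split3 lborel_prod)
qed

lemma integral_vertical_derivative:
  fixes \<phi> :: "real^3 \<Rightarrow> real^3" and \<phi>' :: "real^3 \<Rightarrow> (real^3) \<Rightarrow>\<^sub>L (real^3)"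
  assumes der: "\<And>x. (\<phi> has_derivative blinfun_apply (\<phi>' x)) (at x)" and cont: "continuous_on UNIV \<phi>'"
  shows "(LBINT t. indicator {0..1} t *\<^sub>R (blinfun_apply (\<phi>' (join3 (y, t))) (axis 3 1) \<bullet> axis 3 1))
         = \<phi> (join3 (y, 1)) \<bullet> axis 3 1 - \<phi> (join3 (y, 0)) \<bullet> axis 3 1"
proof -
  define \<gamma> where "\<gamma> t = join3 (y, t)" for t
  have \<gamma>: "\<gamma> = (\<lambda>t. t *\<^sub>R axis 3 1 + join3 (y, 0))"
    by (auto simp: \<gamma>_def fun_eq_iff vec3_eq_iff axis_def)
  have d\<gamma>: "(\<gamma> has_derivative (\<lambda>s. s *\<^sub>R axis 3 1)) (at t)" for t
    unfolding \<gamma> by (intro has_derivative_add_const bounded_linear_imp_has_derivative bounded_linear_scaleR_left)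
  have "((\<lambda>t. \<phi> (\<gamma> t) \<bullet> axis 3 1) has_vector_derivative (blinfun_apply (\<phi>' (\<gamma> t)) (axis 3 1) \<bullet> axis 3 1))
      (at t within {0..1})" for t
  proof -
    have "((\<lambda>t. (\<phi> \<circ> \<gamma>) t \<bullet> axis 3 1) has_derivative
        (\<lambda>s. (blinfun_apply (\<phi>' (\<gamma> t)) \<circ> (\<lambda>s. s *\<^sub>R axis 3 1)) s \<bullet> axis 3 1)) (at t)"
      by (rule bounded_linear.has_derivative[OF bounded_linear_inner_left diff_chain_at[OF d\<gamma> der]])
    then have "((\<lambda>t. \<phi> (\<gamma> t) \<bullet> axis 3 1) has_derivative
        (\<lambda>s. blinfun_apply (\<phi>' (\<gamma> t)) (s *\<^sub>R axis 3 1) \<bullet> axis 3 1)) (at t)"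
      by (simp add: o_def)
    moreover have "(\<lambda>s. blinfun_apply (\<phi>' (\<gamma> t)) (s *\<^sub>R axis 3 1) \<bullet> axis 3 1)
        = (\<lambda>s. s *\<^sub>R (blinfun_apply (\<phi>' (\<gamma> t)) (axis 3 1) \<bullet> axis 3 1))"
      by (auto simp: fun_eq_iff blinfun.scaleR_right)
    ultimately have "((\<lambda>t. \<phi> (\<gamma> t) \<bullet> axis 3 1) has_derivative
        (\<lambda>s. s *\<^sub>R (blinfun_apply (\<phi>' (\<gamma> t)) (axis 3 1) \<bullet> axis 3 1))) (at t)"
      by simp
    then show ?thesis
      unfolding has_vector_derivative_def[symmetric] by (rule has_vector_derivative_at_within)
  qed
  moreover have "continuous_on {0..1} (\<lambda>t. blinfun_apply (\<phi>' (\<gamma> t)) (axis 3 1) \<bullet> axis 3 1)"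
  proof -
    have "continuous_on {0..1} (\<lambda>t. \<phi>' (\<gamma> t))"
      by (rule continuous_on_compose2[OF cont]) (auto simp: \<gamma> intro!: continuous_intros)
    then show ?thesis by (rule continuous_on_blinfun_matrix)
  qed
  ultimately show ?thesis
    using integral_FTC_atLeastAtMost[of 0 1 "\<lambda>t. \<phi> (\<gamma> t) \<bullet> axis 3 1"] by (simp add: \<gamma>_def)
qed

lemma integral_cyl_vertical_le:
  fixes D :: "(real^2) set" and \<phi> :: "real^3 \<Rightarrow> real^3" and \<phi>' :: "real^3 \<Rightarrow> (real^3) \<Rightarrow>\<^sub>L (real^3)"
  assumes D: "compact D" and tf: "test_field \<phi> \<phi>'"
  shows "integral (cyl D) (\<lambda>x. blinfun_apply (\<phi>' x) (axis 3 1) \<bullet> axis 3 1) \<le> 2 * measure lborel D"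
proof -
  have der: "\<And>x. (\<phi> has_derivative blinfun_apply (\<phi>' x)) (at x)" and cont: "continuous_on UNIV \<phi>'"
    and nrm: "\<And>x. norm (\<phi> x) \<le> 1"
    using tf by (auto simp: test_field_def)
  define k where "k = (\<lambda>x. blinfun_apply (\<phi>' x) (axis 3 1) \<bullet> axis 3 1)"
  have ck: "continuous_on UNIV k" unfolding k_def by (rule continuous_on_blinfun_matrix[OF cont])
  define G where "G = (\<lambda>p. indicator D (fst p) * indicator {0..1} (snd p) * k (join3 p))"
  have iG: "integrable (lborel \<Otimes>\<^sub>M lborel) G"
    unfolding G_def by (rule integral_cyl_eq_pair_integral(1)[OF D ck])
  define d where "d y = \<phi> (join3 (y, 1)) \<bullet> axis 3 1 - \<phi> (join3 (y, 0)) \<bullet> axis 3 1" for y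
  have inner: "(LBINT t. G (y, t)) = indicator D y * d y" for y
  proof -
    have "(LBINT t. G (y, t)) = (LBINT t. indicator D y * (indicator {0..1} t *\<^sub>R k (join3 (y, t))))"
      by (simp add: G_def mult.assoc)
    also have "\<dots> = indicator D y * d y"
      using integral_vertical_derivative[OF der cont, of y] by (simp add: k_def d_def)
    finally show ?thesis .
  qed
  have "integral (cyl D) k = (LBINT y. LBINT t. G (y, t))"
    unfolding G_def integral_cyl_eq_pair_integral(2)[OF D ck]
    by (rule lborel_pair.integral_fst'[OF iG[unfolded G_def], symmetric])
  also have "\<dots> = (LBINT y. indicator D y * d y)" by (simp add: inner)
  also have "\<dots> \<le> (LBINT y. indicator D y * 2)"
  proof (rule integral_mono)
    show "integrable lborel (\<lambda>y. indicator D y * d y)"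
      using lborel_pair.integrable_fst'[OF iG] by (simp add: inner)
    show "integrable lborel (\<lambda>y. indicator D y * (2::real))"
      using borel_integrable_compact[OF D, of "\<lambda>_. 2::real"] by simp
    fix y :: "real^2"
    have "\<bar>\<phi> v \<bullet> axis 3 1\<bar> \<le> 1" for v
      using component_le_norm_cart[of "\<phi> v" 3] nrm[of v] by (simp add: inner_axis)
    then have "d y \<le> 2" unfolding d_def by (smt (verit))
    then show "indicator D y * d y \<le> indicator D y * 2" by (simp add: indicator_def)
  qed
  also have "\<dots> = 2 * measure lborel D"
    using D by (simp add: emeasure_bounded_finite compact_imp_bounded mult.commute)
  finally show ?thesis by (simp add: k_def)
qed

lemma test_field_horizontal_slice:
  fixes \<phi> :: "real^3 \<Rightarrow> real^3" and \<phi>' :: "real^3 \<Rightarrow> (real^3) \<Rightarrow>\<^sub>L (real^3)"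
  assumes tf: "test_field \<phi> \<phi>'"
  obtains \<zeta> :: "real^2 \<Rightarrow> real^2" and \<zeta>' where "test_field \<zeta> \<zeta>'"
    and "\<And>y. divergence \<zeta>' y = blinfun_apply (\<phi>' (join3 (y, t))) (axis 1 1) \<bullet> axis 1 1
                             + blinfun_apply (\<phi>' (join3 (y, t))) (axis 2 1) \<bullet> axis 2 1"
proof -
  define \<iota> where "\<iota> v = join3 (v, 0)" for v
  have \<iota>: "linear \<iota>" "\<iota> y + join3 (0, t) = join3 (y, t)" "\<iota> (axis 1 1) = axis 1 1" "\<iota> (axis 2 1) = axis 2 1" for y
    by (auto simp: linear_iff \<iota>_def vec3_eq_iff axis_def)
  have "norm y \<le> norm (\<iota> y + join3 (0, t)) + 0" for y
    using norm_horiz_le[of "join3 (y, t)"] by (simp add: \<iota>)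
  then have "test_field (\<lambda>y. horiz (\<phi> (\<iota> y + join3 (0, t))))
      (\<lambda>y. Blinfun horiz o\<^sub>L \<phi>' (\<iota> y + join3 (0, t)) o\<^sub>L Blinfun \<iota>)"
    by (intro test_field_compose_linear[OF tf linear_horiz norm_horiz_le \<iota>(1)])
  moreover have "bounded_linear horiz" "bounded_linear \<iota>"
    using linear_horiz \<iota>(1) by (simp_all add: linear_conv_bounded_linear)
  then have "divergence (\<lambda>y. Blinfun horiz o\<^sub>L \<phi>' (\<iota> y + join3 (0, t)) o\<^sub>L Blinfun \<iota>) y
      = blinfun_apply (\<phi>' (join3 (y, t))) (axis 1 1) \<bullet> axis 1 1
        + blinfun_apply (\<phi>' (join3 (y, t))) (axis 2 1) \<bullet> axis 2 1" for y
    by (simp add: divergence_cart sum_2 bounded_linear_Blinfun_apply \<iota> inner_axis)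
  ultimately show ?thesis by (rule that)
qed

lemma integral_cyl_eq_integral_slices:
  fixes F :: "real^3 \<Rightarrow> real" and D :: "(real^2) set"
  assumes D: "compact D" and F: "continuous_on UNIV F"
  shows "integrable lborel (\<lambda>t. indicator {0..1} t * integral D (\<lambda>y. F (join3 (y, t))))"
    and "integral (cyl D) F = (LBINT t. indicator {0..1} t * integral D (\<lambda>y. F (join3 (y, t))))"
proof -
  define G where "G = (\<lambda>p. indicator D (fst p) * indicator {0..1} (snd p) * F (join3 p))"
  have "integrable (lborel \<Otimes>\<^sub>M lborel) G"
    unfolding G_def by (rule integral_cyl_eq_pair_integral(1)[OF D F])
  then have iG: "integrable (lborel \<Otimes>\<^sub>M lborel) (\<lambda>(y, t). G (y, t))" by simp
  have slice: "(LBINT y. G (y, t)) = indicator {0..1} t * integral D (\<lambda>y. F (join3 (y, t)))" for t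
  proof -
    have "continuous_on D (\<lambda>y. F (join3 (y, t)))"
      by (rule continuous_on_compose2[OF F])
         (auto intro!: continuous_on_compose2[OF continuous_on_join3] continuous_intros)
    then have "integral D (\<lambda>y. F (join3 (y, t))) = (LBINT y. indicator D y * F (join3 (y, t)))"
      by (rule integral_continuous_compact_lborel(2)[OF D])
    moreover have "(LBINT y. G (y, t)) = (LBINT y. indicator {0..1} t * (indicator D y * F (join3 (y, t))))"
      by (simp add: G_def mult_ac)
    ultimately show ?thesis by (simp add: integral_mult_right_zero)
  qed
  show "integrable lborel (\<lambda>t. indicator {0..1} t * integral D (\<lambda>y. F (join3 (y, t))))"
    using lborel_pair.integrable_snd[OF iG] by (simp add: slice)
  have "integral (cyl D) F = integral\<^sup>L (lborel \<Otimes>\<^sub>M lborel) G"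
    unfolding G_def by (rule integral_cyl_eq_pair_integral(2)[OF D F])
  also have "\<dots> = (LBINT t. LBINT y. G (y, t))"
    using lborel_pair.integral_snd[OF iG] by simp
  finally show "integral (cyl D) F = (LBINT t. indicator {0..1} t * integral D (\<lambda>y. F (join3 (y, t))))"
    by (simp add: slice)
qed

lemma integral_cyl_horizontal_le:
  fixes D :: "(real^2) set" and \<phi> :: "real^3 \<Rightarrow> real^3" and \<phi>' :: "real^3 \<Rightarrow> (real^3) \<Rightarrow>\<^sub>L (real^3)"
  assumes D: "compact D" and tf: "test_field \<phi> \<phi>'"
    and CD: "\<And>\<psi> \<psi>'. test_field (\<psi> :: real^2 \<Rightarrow> real^2) \<psi>' \<Longrightarrow> integral D (divergence \<psi>') \<le> CD"
  shows "integral (cyl D) (\<lambda>x. blinfun_apply (\<phi>' x) (axis 1 1) \<bullet> axis 1 1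
                              + blinfun_apply (\<phi>' x) (axis 2 1) \<bullet> axis 2 1) \<le> CD"
proof -
  have cont: "continuous_on UNIV \<phi>'" using tf by (auto simp: test_field_def)
  define h where "h = (\<lambda>x. blinfun_apply (\<phi>' x) (axis 1 1) \<bullet> axis 1 1 + blinfun_apply (\<phi>' x) (axis 2 1) \<bullet> axis 2 1)"
  have ch: "continuous_on UNIV h" unfolding h_def
    by (intro continuous_intros continuous_on_blinfun_matrix[OF cont])
  have "integral (cyl D) h = (LBINT t. indicator {0..1} t * integral D (\<lambda>y. h (join3 (y, t))))"
    by (rule integral_cyl_eq_integral_slices(2)[OF D ch])
  also have "\<dots> \<le> (LBINT t::real. indicator {0..1} t * CD)"
  proof (rule integral_mono)
    show "integrable lborel (\<lambda>t::real. indicator {0..1} t * CD)"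
      using borel_integrable_compact[OF compact_Icc, of 0 1 "\<lambda>_. CD"] by simp
    fix t :: real
    obtain \<zeta> :: "real^2 \<Rightarrow> real^2" and \<zeta>' where z: "test_field \<zeta> \<zeta>'"
      and dz: "\<And>y. divergence \<zeta>' y = blinfun_apply (\<phi>' (join3 (y, t))) (axis 1 1) \<bullet> axis 1 1
                             + blinfun_apply (\<phi>' (join3 (y, t))) (axis 2 1) \<bullet> axis 2 1"
      using test_field_horizontal_slice[OF tf, of t] by blast
    have "divergence \<zeta>' = (\<lambda>y. h (join3 (y, t)))"
      using dz by (simp add: h_def fun_eq_iff)
    then have "integral D (\<lambda>y. h (join3 (y, t))) \<le> CD" using CD[OF z] by simp
    then show "indicator {0..1} t * integral D (\<lambda>y. h (join3 (y, t))) \<le> indicator {0..1} t * CD"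
      by (simp add: indicator_def)
  qed (rule integral_cyl_eq_integral_slices(1)[OF D ch])
  also have "\<dots> = CD" by simp
  finally show ?thesis by (simp add: h_def)
qed

lemma finite_perimeter_cyl:
  fixes D :: "(real^2) set"
  assumes D: "compact D" and fD: "finite_perimeter D"
  shows "finite_perimeter (cyl D)"
proof -
  obtain CD where CD: "\<And>\<psi> \<psi>'. test_field (\<psi> :: real^2 \<Rightarrow> real^2) \<psi>' \<Longrightarrow> integral D (divergence \<psi>') \<le> CD"
    using fD by (auto simp: finite_perimeter_def)
  have C: "compact (cyl D)" by (rule compact_cyl[OF D])
  have "integral (cyl D) (divergence \<phi>') \<le> CD + 2 * measure lborel D" if tf: "test_field \<phi> \<phi>'" for \<phi> \<phi>'
  proof -
    have cont: "continuous_on UNIV \<phi>'" using tf by (auto simp: test_field_def)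
    define h where "h = (\<lambda>x. blinfun_apply (\<phi>' x) (axis 1 1) \<bullet> axis 1 1 + blinfun_apply (\<phi>' x) (axis 2 1) \<bullet> axis 2 1)"
    define k where "k = (\<lambda>x. blinfun_apply (\<phi>' x) (axis 3 1) \<bullet> axis 3 1)"
    have "h integrable_on cyl D" "k integrable_on cyl D"
      unfolding h_def k_def using C
      by (auto intro!: integral_continuous_compact_lborel(1) continuous_intros
          continuous_on_blinfun_matrix[OF continuous_on_subset[OF cont]])
    moreover have "divergence \<phi>' = (\<lambda>x. h x + k x)"
      by (simp add: fun_eq_iff divergence_cart sum_3 h_def k_def inner_axis)
    ultimately have "integral (cyl D) (divergence \<phi>') = integral (cyl D) h + integral (cyl D) k"
      by (simp add: integral_add)
    also have "\<dots> \<le> CD + 2 * measure lborel D"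
      using integral_cyl_horizontal_le[OF D tf CD] integral_cyl_vertical_le[OF D tf]
      unfolding h_def k_def by (rule add_mono)
    finally show ?thesis .
  qed
  moreover have "cyl D \<in> sets lebesgue" by (intro fmeasurableD lmeasurable_compact C)
  ultimately show ?thesis unfolding finite_perimeter_def by blast
qed

section \<open>Three rotated copies of the cylinder\<close>

lemma mink_quot_isometric_cyl_at_top:
  fixes D :: "(real^2) set" and Q :: "(real^3) set" and R :: "real^3 \<Rightarrow> real^3"
  assumes D: "compact D" and lim: "filterlim (mink_quot (cball 0 1) D) at_top (at_right 0)"
    and R: "orthogonal_transformation R" and Q: "compact Q"
    and axis: "a \<bullet> R (axis 3 1) \<noteq> 0" and e: "e > 0"
    and disc: "\<And>v. a \<bullet> v = 0 \<Longrightarrow> norm v \<le> e \<Longrightarrow> q0 + v \<in> Q"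
  shows "filterlim (mink_quot Q ((\<lambda>x. R x + c) ` cyl D)) at_top (at_right 0)"
proof -
  \<comment> \<open>Undo the rotation: \<open>R'\<close> moves the disc of \<open>Q\<close> into the plane with normal \<open>R' a\<close>,
    and \<open>R' a $ 3 = a \<bullet> R (axis 3 1) \<noteq> 0\<close>.\<close>
  define R' where "R' = inv R"
  have R': "orthogonal_transformation R'" unfolding R'_def by (rule orthogonal_transformation_inv[OF R])
  have inv: "R (R' y) = y" "R' (R y) = y" for y
    using orthogonal_transformation_bij[OF R] unfolding R'_def
    by (simp_all add: bij_is_surj surj_f_inv_f bij_is_inj)
  have inner: "R v \<bullet> R w = v \<bullet> w" "R' v \<bullet> R' w = v \<bullet> w" for v w
    using R R' by (simp_all add: orthogonal_transformation_def)
  have QR: "Q = R ` (R' ` Q)" by (simp add: image_image inv)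
  have R'Q: "compact (R' ` Q)"
    using Q orthogonal_transformation_linear[OF R']
    by (intro compact_continuous_image linear_continuous_on) (simp add: linear_conv_bounded_linear)
  have "R' q0 + v \<in> R' ` Q" if "R' a \<bullet> v = 0" "norm v \<le> e" for v
  proof -
    have "a \<bullet> R v = 0" using that(1) inner(2)[of a "R v"] by (simp add: inv)
    then have "q0 + R v \<in> Q"
      using disc that(2) orthogonal_transformation_norm[OF R] by simp
    moreover have "R' (q0 + R v) = R' q0 + v"
      using linear_add[OF orthogonal_transformation_linear[OF R']] by (simp add: inv)
    ultimately show ?thesis by (metis imageI)
  qed
  moreover have "R' a $ 3 \<noteq> 0"
    using axis inner(1)[of "R' a" "axis 3 1"] by (simp add: inv inner_axis)
  ultimately have "filterlim (mink_quot (R' ` Q) (cyl D)) at_top (at_right 0)"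
    using mink_quot_cyl_at_top[OF D lim R'Q _ e] by blast
  moreover have "mink_quot (R ` R' ` Q) ((\<lambda>x. R x + c) ` cyl D) = mink_quot (R' ` Q) (cyl D)"
    using mink_quot_isometric_image[OF R compact_cyl[OF D] R'Q] by (intro ext) simp
  ultimately show ?thesis by (subst QR) simp
qed

definition cycle3 :: "real^3 \<Rightarrow> real^3" where
  "cycle3 x = vector [x$3, x$1, x$2]"

lemma orthogonal_transformation_cycle3: "orthogonal_transformation cycle3"
  by (auto simp: orthogonal_transformation_def linear_iff cycle3_def vec3_eq_iff inner_vec_def sum_3)

lemma orthogonal_transformation_cycle3_funpow: "orthogonal_transformation (cycle3 ^^ k)"
proof (induction k)
  case (Suc k)
  then show ?case
    using orthogonal_transformation_compose[OF orthogonal_transformation_cycle3 Suc.IH] by (simp add: o_def)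
qed (simp add: id_def)

definition copy_map :: "real \<Rightarrow> nat \<Rightarrow> real^3 \<Rightarrow> real^3" where
  "copy_map M k x = (cycle3 ^^ k) x + (real k * M) *\<^sub>R axis 1 1"

lemma isometry3_copy_map: "isometry3 (copy_map M k)"
  using orthogonal_transformation_cycle3_funpow[of k]
  by (simp add: isometry3_def copy_map_def dist_norm orthogonal_transformation_norm
      linear_diff[OF orthogonal_transformation_linear, symmetric])

lemma cycle3_funpow_axis_nonzero:
  fixes a :: "real^3"
  assumes "a \<noteq> 0"
  obtains k where "k < 3" "a \<bullet> (cycle3 ^^ k) (axis 3 1) \<noteq> 0"
proof -
  have e: "(cycle3 ^^ 0) (axis 3 1) = axis 3 1" "(cycle3 ^^ 1) (axis 3 1) = axis 1 1"
    "(cycle3 ^^ 2) (axis 3 1) = axis 2 1"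
    by (simp_all add: cycle3_def vec3_eq_iff axis_def numeral_2_eq_2)
  consider "a$3 \<noteq> 0" | "a$1 \<noteq> 0" | "a$2 \<noteq> 0" using assms by (auto simp: vec3_eq_iff)
  then show ?thesis
  proof cases
    case 1 then show ?thesis using that[of 0] e by (simp add: inner_axis)
  next
    case 2 then show ?thesis using that[of 1] e by (simp add: inner_axis)
  next
    case 3 then show ?thesis using that[of 2] e by (simp add: inner_axis)
  qed
qed

lemma continuous_on_copy_map: "continuous_on S (copy_map M k)"
  unfolding copy_map_def using orthogonal_transformation_linear[OF orthogonal_transformation_cycle3_funpow]
  by (intro continuous_intros linear_continuous_on) (simp add: linear_conv_bounded_linear)

lemma copy_map_image_subset_cball:
  assumes "C \<subseteq> cball 0 B"
  shows "copy_map M k ` C \<subseteq> cball ((real k * M) *\<^sub>R axis 1 1) B"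
  using assms orthogonal_transformation_norm[OF orthogonal_transformation_cycle3_funpow]
  by (auto simp: copy_map_def dist_norm)

lemma cball_axis_disjoint:
  assumes "B \<ge> 0" "j \<noteq> k"
  shows "cball ((real j * (2 * B + 3)) *\<^sub>R axis 1 1) B
         \<inter> cball ((real k * (2 * B + 3)) *\<^sub>R axis 1 1) (B + 1) = ({} :: (real^3) set)"
proof -
  have "1 \<le> \<bar>real j - real k\<bar>" using assms(2) by linarith
  then have "2 * B + 3 \<le> \<bar>real j - real k\<bar> * (2 * B + 3)"
    using assms(1) by (simp add: mult_le_cancel_right1)
  also have "\<dots> = dist ((real j * (2 * B + 3)) *\<^sub>R axis 1 1) ((real k * (2 * B + 3)) *\<^sub>R axis 1 (1::real) :: real^3)"
    using assms(1) by (simp add: dist_norm scaleR_diff_left[symmetric] left_diff_distrib[symmetric] abs_mult)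
  finally have far: "2 * B + 3 \<le> dist ((real j * (2 * B + 3)) *\<^sub>R axis 1 1)
      ((real k * (2 * B + 3)) *\<^sub>R axis 1 (1::real) :: real^3)" .
  have "dist ((real j * (2 * B + 3)) *\<^sub>R axis 1 1) z > B
      \<or> dist ((real k * (2 * B + 3)) *\<^sub>R axis 1 1) z > B + 1" for z :: "real^3"
    using far dist_triangle3[of "(real j * (2 * B + 3)) *\<^sub>R axis 1 (1::real) :: real^3"
        "(real k * (2 * B + 3)) *\<^sub>R axis 1 1" z] by (simp add: dist_commute, linarith)
  then show ?thesis by (auto simp: not_le[symmetric])
qed

lemma copy_map_images_disjoint:
  assumes "C \<subseteq> cball 0 B" "B \<ge> 0" "j \<noteq> k"
  shows "copy_map (2 * B + 3) j ` C \<inter> copy_map (2 * B + 3) k ` C = {}"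
  using copy_map_image_subset_cball[OF assms(1)] cball_axis_disjoint[OF assms(2,3)]
  by (fastforce simp: subset_iff)

lemma mink_quot_copies_at_top:
  fixes C Q :: "(real^3) set"
  assumes C: "compact C" "C \<subseteq> cball 0 B" and B: "B \<ge> 0" and Q: "compact Q" and k: "k < n"
    and lim: "filterlim (mink_quot Q (copy_map (2 * B + 3) k ` C)) at_top (at_right 0)"
  shows "filterlim (mink_quot Q (\<Union>j<n. copy_map (2 * B + 3) j ` C)) at_top (at_right 0)"
proof -
  define X where "X j = copy_map (2 * B + 3) j ` C" for j
  have cX: "compact (X j)" for j
    unfolding X_def using C(1) by (intro compact_continuous_image continuous_on_copy_map)
  have "(\<Union>j<n. X j) = X k \<union> (\<Union>j\<in>{..<n} - {k}. X j)" using k by auto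
  moreover have "(\<Union>j\<in>{..<n} - {k}. X j) \<inter> cball ((real k * (2 * B + 3)) *\<^sub>R axis 1 1) (B + 1) = {}"
    using copy_map_image_subset_cball[OF C(2)] cball_axis_disjoint[OF B] unfolding X_def by blast
  then have "filterlim (mink_quot Q (X k \<union> (\<Union>j\<in>{..<n} - {k}. X j))) at_top (at_right 0)"
    using lim cX Q copy_map_image_subset_cball[OF C(2)]
    by (intro mink_quot_Un_at_top eventually_msum_dilate_disjoint compact_UN compact_imp_bounded)
       (auto simp: X_def)
  ultimately show ?thesis by (simp add: X_def)
qed

lemma finite_perimeter_copies:
  assumes C: "compact C" "C \<subseteq> cball 0 B" "finite_perimeter C" and B: "B \<ge> 0"
  shows "finite_perimeter (\<Union>j<n. copy_map (2 * B + 3) j ` C)"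
proof (induction n)
  case 0
  show ?case by (auto simp: finite_perimeter_def)
next
  case (Suc n)
  define X where "X j = copy_map (2 * B + 3) j ` C" for j
  have cX: "compact (X j)" for j
    unfolding X_def using C(1) by (intro compact_continuous_image continuous_on_copy_map)
  have "finite_perimeter (X n)"
    unfolding X_def copy_map_def
    by (intro finite_perimeter_isometric_image orthogonal_transformation_cycle3_funpow C)
  moreover have "X j \<inter> X n = {}" if "j < n" for j
    using copy_map_images_disjoint[OF C(2) B, of j n] that by (simp add: X_def)
  then have "(\<Union>j<n. X j) \<inter> X n = {}" by blast
  ultimately have "finite_perimeter ((\<Union>j<n. X j) \<union> X n)"
    using Suc.IH cX by (intro finite_perimeter_Un_disjoint compact_UN) (auto simp: X_def)
  then show ?case by (simp add: X_def lessThan_Suc Un_commute)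
qed

lemma mink_quot_cyl_copies_at_top:
  fixes D :: "(real^2) set" and Q :: "(real^3) set"
  assumes D: "compact D" and lim: "filterlim (mink_quot (cball 0 1) D) at_top (at_right 0)"
    and B: "B \<ge> 0" "cyl D \<subseteq> cball 0 B" and Q: "compact Q" and a: "a \<noteq> 0" and e: "e > 0"
    and disc: "\<And>v. a \<bullet> v = 0 \<Longrightarrow> norm v \<le> e \<Longrightarrow> q0 + v \<in> Q"
  shows "filterlim (mink_quot Q (\<Union>j<3. copy_map (2 * B + 3) j ` cyl D)) at_top (at_right 0)"
proof -
  obtain k where k: "k < 3" "a \<bullet> (cycle3 ^^ k) (axis 3 1) \<noteq> 0"
    using cycle3_funpow_axis_nonzero[OF a] by blast
  have "filterlim (mink_quot Q (copy_map (2 * B + 3) k ` cyl D)) at_top (at_right 0)"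
    unfolding copy_map_def
    by (rule mink_quot_isometric_cyl_at_top[OF D lim orthogonal_transformation_cycle3_funpow Q k(2) e disc])
  then show ?thesis
    by (rule mink_quot_copies_at_top[OF compact_cyl[OF D] B(2) B(1) Q k(1)])
qed

lemma mink_quot_cyl_copies_planar_at_top:
  fixes D :: "(real^2) set" and Q L :: "(real^3) set"
  assumes D: "compact D" and lim: "filterlim (mink_quot (cball 0 1) D) at_top (at_right 0)"
    and B: "B \<ge> 0" "cyl D \<subseteq> cball 0 B"
    and Q: "compact Q" "convex Q" "aff_dim Q = 2" and L: "subspace L" "dim L = 2" "Q \<subseteq> L"
  shows "filterlim (mink_quot Q (\<Union>j<3. copy_map (2 * B + 3) j ` cyl D)) at_top (at_right 0)"
proof -
  obtain a where a: "a \<noteq> 0" "L = {x. a \<bullet> x = 0}"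
    using subspace_eq_hyperplane[of L] L(1,2) by auto
  then obtain q0 e where "e > 0" "\<And>v. a \<bullet> v = 0 \<Longrightarrow> norm v \<le> e \<Longrightarrow> q0 + v \<in> Q"
    using planar_convex_contains_disc[OF Q(2,3)] L(3) by metis
  then show ?thesis by (rule mink_quot_cyl_copies_at_top[OF D lim B Q(1) a(1)])
qed

lemma three_copies_of_cyl:
  fixes D :: "(real^2) set"
  assumes D: "compact D" "finite_perimeter D"
    and lim: "filterlim (mink_quot (cball 0 1) D) at_top (at_right 0)"
  shows "\<exists>A :: (real^3) set. compact A \<and> finite_perimeter A
         \<and> (\<exists>T1 T2 T3. isometry3 T1 \<and> isometry3 T2 \<and> isometry3 T3
              \<and> A = T1 ` cyl D \<union> T2 ` cyl D \<union> T3 ` cyl D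
              \<and> T1 ` cyl D \<inter> T2 ` cyl D = {} \<and> T1 ` cyl D \<inter> T3 ` cyl D = {}
              \<and> T2 ` cyl D \<inter> T3 ` cyl D = {})
         \<and> \<not> admits_outer_MC (cball 0 1) A
         \<and> (\<forall>Q :: (real^3) set. compact Q \<and> convex Q \<and> aff_dim Q = 2
              \<and> (\<exists>L. subspace L \<and> dim L = 2 \<and> Q \<subseteq> L) \<longrightarrow> \<not> admits_outer_MC Q A)"
proof -
  obtain B where "B > 0" "\<forall>x\<in>cyl D. norm x \<le> B"
    using compact_imp_bounded[OF compact_cyl[OF D(1)]] by (auto simp: bounded_pos)
  then have B: "B \<ge> 0" "cyl D \<subseteq> cball 0 B" by auto
  define T where "T = copy_map (2 * B + 3)"
  define A where "A = (\<Union>j<3. T j ` cyl D)"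
  have cA: "compact A"
    unfolding A_def T_def by (intro compact_UN compact_continuous_image continuous_on_copy_map compact_cyl D) simp
  have fpA: "finite_perimeter A"
    unfolding A_def T_def by (intro finite_perimeter_copies compact_cyl finite_perimeter_cyl D B)
  have ballA: "\<not> admits_outer_MC (cball 0 1) A"
    unfolding A_def T_def
    by (rule not_admits_outer_MC_if_filterlim_at_top,
        rule mink_quot_cyl_copies_at_top[OF D(1) lim B compact_cball _ zero_less_one, of "axis 3 1" 0]) auto
  have planarA: "\<not> admits_outer_MC Q A"
    if "compact Q \<and> convex Q \<and> aff_dim Q = 2 \<and> (\<exists>L. subspace L \<and> dim L = 2 \<and> Q \<subseteq> L)" for Q
    using that mink_quot_cyl_copies_planar_at_top[OF D(1) lim B, of Q] not_admits_outer_MC_if_filterlim_at_top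
    unfolding A_def T_def by blast
  have "A = T 0 ` cyl D \<union> T 1 ` cyl D \<union> T 2 ` cyl D"
    by (simp add: A_def numeral_3_eq_3 numeral_2_eq_2 lessThan_Suc Un_ac)
  then have "\<exists>T1 T2 T3. isometry3 T1 \<and> isometry3 T2 \<and> isometry3 T3
              \<and> A = T1 ` cyl D \<union> T2 ` cyl D \<union> T3 ` cyl D
              \<and> T1 ` cyl D \<inter> T2 ` cyl D = {} \<and> T1 ` cyl D \<inter> T3 ` cyl D = {}
              \<and> T2 ` cyl D \<inter> T3 ` cyl D = {}"
    using copy_map_images_disjoint[OF B(2,1)] isometry3_copy_map
    by (intro exI[of _ "T 0"] exI[of _ "T 1"] exI[of _ "T 2"]) (simp add: T_def)
  then show ?thesis
    using cA fpA ballA planarA by (intro exI[of _ A]) simp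
qed

theorem mainTheorem12:
  fixes D :: "(real^2) set"
  assumes "compact D" and "finite_perimeter D"
    and "filterlim (mink_quot (cball 0 1) D) at_top (at_right 0)"
  shows "\<not> admits_outer_MC (cball (0::real^3) 1) (cyl D)
    \<and> (\<forall>L :: (real^3) set. subspace L \<and> dim L = 2 \<and> e3 \<notin> L \<longrightarrow>
          \<not> admits_outer_MC (cball 0 1 \<inter> L) (cyl D)
          \<and> (\<forall>Q. compact Q \<and> convex Q \<and> aff_dim Q = 2 \<and> Q \<subseteq> L \<longrightarrow>
                 filterlim (mink_quot Q (cyl D)) at_top (at_right 0)))
    \<and> (\<exists>A :: (real^3) set. compact A \<and> finite_perimeter A
         \<and> (\<exists>T1 T2 T3. isometry3 T1 \<and> isometry3 T2 \<and> isometry3 T3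
              \<and> A = T1 ` cyl D \<union> T2 ` cyl D \<union> T3 ` cyl D
              \<and> T1 ` cyl D \<inter> T2 ` cyl D = {} \<and> T1 ` cyl D \<inter> T3 ` cyl D = {}
              \<and> T2 ` cyl D \<inter> T3 ` cyl D = {})
         \<and> \<not> admits_outer_MC (cball 0 1) A
         \<and> (\<forall>Q :: (real^3) set. compact Q \<and> convex Q \<and> aff_dim Q = 2
              \<and> (\<exists>L. subspace L \<and> dim L = 2 \<and> Q \<subseteq> L) \<longrightarrow> \<not> admits_outer_MC Q A))"
proof -
  note D = assms(1) and lim = assms(3)
  have "\<forall>L :: (real^3) set. subspace L \<and> dim L = 2 \<and> e3 \<notin> L \<longrightarrow>
      \<not> admits_outer_MC (cball 0 1 \<inter> L) (cyl D)
      \<and> (\<forall>Q. compact Q \<and> convex Q \<and> aff_dim Q = 2 \<and> Q \<subseteq> L \<longrightarrow>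
             filterlim (mink_quot Q (cyl D)) at_top (at_right 0))"
    using not_admits_outer_MC_if_filterlim_at_top[OF mink_quot_cyl_ball_plane_at_top[OF D lim]]
      mink_quot_cyl_planar_at_top[OF D lim] by blast
  then show ?thesis
    using not_admits_outer_MC_if_filterlim_at_top[OF mink_quot_cyl_ball_at_top[OF D lim]]
      three_copies_of_cyl[OF assms]
    by (intro conjI)
qed

end
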